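(* Let $\epsilon>0$ be any constant. Consider the family of all cost functions $C:2^N\to\mathbb{R}_{\ge0}$ on $N=\{1,\dots,n\}$ with $C(\emptyset)=0$ and $\max_S C(S)$ bounded by a polynomial in $n$. Over the Shapley distribution $\mathcal{D}^{sh}$, the Shapley value of this family is $(1-\epsilon)$-approximable from samples.
   Context: The Shapley value of $C$ is $\phi_i=\mathbb{E}_{\sigma}[C(S_{\sigma<i}\cup\{i\})-C(S_{\sigma<i})]$, where $\sigma$ is a uniformly random permutation of $N$ and $S_{\sigma<i}$ is the set of players preceding $i$ in $\sigma$. The Shapley distribution $\mathcal{D}^{sh}$ over $2^N$ first picks a size $j\in\{0,\dots,n\}$ uniformly at random and then a uniformly random subset of size $j$. An algorithm $\alpha$-approximates ($\alpha\in(0,1]$) the Shapley value of a family $\mathcal{C}$ over distribution $\mathcal{D}$ if for all $C\in\mathcal{C}$ and all $\delta>0$, given $\mathrm{poly}(n,1/\delta,1/(1-\alpha))$ i.i.d. samples $(S,C(S))$ with $S\sim\mathcal{D}$, it computes estimates $\tilde\phi\in\mathbb{R}^n$ such that, with probability at least $1-\delta$ over the samples and its choices, for all $i\in N$: if $\phi_i\ge 1/\mathrm{poly}(n)$ then $\alpha\phi_i\le\tilde\phi_i\le\phi_i/\alpha$; if $\phi_i\le-1/\mathrm{poly}(n)$ then $\phi_i/\alpha\le\tilde\phi_i\le\alpha\phi_i$; if $|\phi_i|<1/\mathrm{poly}(n)$ then $|\phi_i-\tilde\phi_i|=o(1)$. The family has Shapley value $\alpha$-approximable from samples over $\mathcal{D}$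 if such an algorithm exists. *)

theory Defs
  imports "HOL-Probability.Probability" "HOL-Combinatorics.Multiset_Permutations"
begin

text \<open>Players: N = {1..n}. Cost functions are modelled as maps nat set \<Rightarrow> real;
only their values on subsets of N are relevant.\<close>

definition players :: "nat \<Rightarrow> nat set" where
  "players n = {1..n}"

definition preceding :: "nat list \<Rightarrow> nat \<Rightarrow> nat set" where
  "preceding xs i = set (takeWhile (\<lambda>x. x \<noteq> i) xs)"

definition shapley :: "nat \<Rightarrow> (nat set \<Rightarrow> real) \<Rightarrow> nat \<Rightarrow> real" where
  "shapley n C i =
     measure_pmf.expectation (pmf_of_set (permutations_of_set (players n)))
       (\<lambda>xs. C (preceding xs i \<union> {i}) - C (preceding xs i))"

definition shapley_dist :: "nat \<Rightarrow> nat set pmf" where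
  "shapley_dist n =
     bind_pmf (pmf_of_set {0..n})
       (\<lambda>j. pmf_of_set {S. S \<subseteq> players n \<and> card S = j})"

definition bounded_costs :: "real \<Rightarrow> nat \<Rightarrow> nat \<Rightarrow> (nat set \<Rightarrow> real) set" where
  "bounded_costs c k n =
     {C. C {} = 0 \<and> (\<forall>S. S \<subseteq> players n \<longrightarrow> 0 \<le> C S \<and> C S \<le> c * real n ^ k)}"

definition samples :: "nat set pmf \<Rightarrow> nat \<Rightarrow> (nat set \<Rightarrow> real) \<Rightarrow> (nat \<Rightarrow> nat set \<times> real) pmf" where
  "samples D m C =
     map_pmf (\<lambda>f t. if t < m then (f t, C (f t)) else ({}, 0)) (Pi_pmf {..<m} {} (\<lambda>_. D))"

definition good_estimate :: "real \<Rightarrow> real \<Rightarrow> real \<Rightarrow> real \<Rightarrow> real \<Rightarrow> bool" where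
  "good_estimate \<alpha> t e phi phi' \<longleftrightarrow>
     (phi \<ge> t \<longrightarrow> \<alpha> * phi \<le> phi' \<and> phi' \<le> phi / \<alpha>) \<and>
     (phi \<le> - t \<longrightarrow> phi / \<alpha> \<le> phi' \<and> phi' \<le> \<alpha> * phi) \<and>
     (\<bar>phi\<bar> < t \<longrightarrow> \<bar>phi - phi'\<bar> \<le> e)"

text \<open>An algorithm gets n, delta and m(n,delta) samples, and outputs (randomly)
  an estimate vector. m is polynomial in n and 1/delta (alpha being fixed,
  the dependence on 1/(1-alpha) is absorbed into the constants), the
  threshold is 1/(a*n^b) and the additive error e(n) tends to 0.\<close>
definition shapley_approx_from_samples ::
  "real \<Rightarrow> (nat \<Rightarrow> (nat set \<Rightarrow> real) set) \<Rightarrow> (nat \<Rightarrow> nat set pmf) \<Rightarrow> bool" where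
  "shapley_approx_from_samples \<alpha> Fam D \<longleftrightarrow>
    (\<exists>(m :: nat \<Rightarrow> real \<Rightarrow> nat)
       (A :: nat \<Rightarrow> real \<Rightarrow> (nat \<Rightarrow> nat set \<times> real) \<Rightarrow> (nat \<Rightarrow> real) pmf)
       (cm :: real) (km :: nat) (a :: real) (b :: nat) (e :: nat \<Rightarrow> real).
       (\<forall>n \<delta>. \<delta> > 0 \<longrightarrow> real (m n \<delta>) \<le> cm * (real n + 1 / \<delta>) ^ km) \<and>
       a > 0 \<and> e \<longlonglongrightarrow> 0 \<and>
       (\<forall>n \<ge> 1. \<forall>C \<in> Fam n. \<forall>\<delta> > 0.
          measure_pmf.prob
            (bind_pmf (samples (D n) (m n \<delta>) C) (A n \<delta>))
            {est. \<forall>i \<in> players n.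
                    good_estimate \<alpha> (1 / (a * real n ^ b)) (e n) (shapley n C i) (est i)}
          \<ge> 1 - \<delta>))"

end

theory Submission
  imports Defs
begin

text \<open>The Shapley value is an expectation under the Shapley distribution. A set \<open>T\<close>
  has probability \<open>1 / ((n + 1) * (n choose card T))\<close>, so weighting \<open>C T\<close> by
  \<open>(n + 1) / card T\<close> if \<open>i \<in> T\<close> and by \<open>- (n + 1) / (n - card T)\<close> otherwise turns this
  probability into the Shapley coefficient of \<open>T - {i}\<close>, with the sign it carries in the
  marginal contribution; a single sample thus gives an unbiased estimate of \<open>\<phi>\<^sub>i\<close>. The weights
  are bounded by \<open>n + 1\<close>, so Hoeffding's inequality and a union bound over the players show
  that polynomially many samples bring every empirical mean within \<open>\<epsilon> / n\<close> of \<open>\<phi>\<^sub>i\<close> with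
  probability \<open>1 - \<delta>\<close>. An additive error \<open>\<epsilon> / n\<close> is a relative error \<open>\<epsilon>\<close> for
  \<open>\<bar>\<phi>\<^sub>i\<bar> \<ge> 1 / n\<close>, and it tends to \<open>0\<close>.\<close>

lemma preceding_append_Cons:
  assumes "i \<notin> set ys"
  shows "preceding (ys @ i # zs) i = set ys"
  unfolding preceding_def using assms by (subst takeWhile_append2) auto

lemma preceding_fiber_bij:
  assumes "finite N" "i \<in> N" "S \<subseteq> N - {i}"
  shows "bij_betw (\<lambda>(ys, zs). ys @ i # zs)
     (permutations_of_set S \<times> permutations_of_set (N - {i} - S))
     {xs \<in> permutations_of_set N. preceding xs i = S}"
proof (rule bij_betw_imageI)
  show "inj_on (\<lambda>(ys, zs). ys @ i # zs) (permutations_of_set S \<times> permutations_of_set (N - {i} - S))"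
  proof (rule inj_onI, clarify)
    fix ys zs ys' zs'
    assume "ys \<in> permutations_of_set S" "zs \<in> permutations_of_set (N - {i} - S)"
      and eq: "ys @ i # zs = ys' @ i # zs'"
    then have "i \<notin> set ys" "i \<notin> set zs" using assms by (auto simp: permutations_of_set_def)
    then show "ys = ys' \<and> zs = zs'" using eq append_Cons_eq_iff by metis
  qed
  show "(\<lambda>(ys, zs). ys @ i # zs) ` (permutations_of_set S \<times> permutations_of_set (N - {i} - S)) =
     {xs \<in> permutations_of_set N. preceding xs i = S}"
  proof (intro equalityI subsetI)
    fix xs assume "xs \<in> (\<lambda>(ys, zs). ys @ i # zs) `
        (permutations_of_set S \<times> permutations_of_set (N - {i} - S))"
    then obtain ys zs where xs: "xs = ys @ i # zs" and "ys \<in> permutations_of_set S"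
      and "zs \<in> permutations_of_set (N - {i} - S)" by auto
    then show "xs \<in> {xs \<in> permutations_of_set N. preceding xs i = S}"
      using assms by (auto simp: permutations_of_set_def preceding_append_Cons)
  next
    fix xs assume "xs \<in> {xs \<in> permutations_of_set N. preceding xs i = S}"
    then have xs: "distinct xs" "set xs = N" "preceding xs i = S"
      by (auto simp: permutations_of_set_def)
    then obtain ys zs where split: "xs = ys @ i # zs" "i \<notin> set ys"
      using \<open>i \<in> N\<close> split_list_first by metis
    then have "set ys = S" using xs(3) by (simp add: preceding_append_Cons)
    then have "(ys, zs) \<in> permutations_of_set S \<times> permutations_of_set (N - {i} - S)"
      using xs split by (auto simp: permutations_of_set_def)
    then show "xs \<in> (\<lambda>(ys, zs). ys @ i # zs) `
        (permutations_of_set S \<times> permutations_of_set (N - {i} - S))"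
      using split by force
  qed
qed

lemma card_preceding_fiber:
  assumes "finite N" "i \<in> N" "S \<subseteq> N - {i}"
  shows "card {xs \<in> permutations_of_set N. preceding xs i = S} = fact (card S) * fact (card N - 1 - card S)"
proof -
  have "card {xs \<in> permutations_of_set N. preceding xs i = S} =
     card (permutations_of_set S \<times> permutations_of_set (N - {i} - S))"
    using bij_betw_same_card[OF preceding_fiber_bij[OF assms]] by simp
  also have "\<dots> = fact (card S) * fact (card (N - {i} - S))"
    using assms by (simp add: card_cartesian_product finite_subset)
  also have "card (N - {i} - S) = card N - 1 - card S"
    using assms by (subst card_Diff_subset) (auto simp: finite_subset card_insert_if)
  finally show ?thesis .
qed

lemma shapley_eq_sum_coefficients:
  assumes i: "i \<in> players n"
  shows "shapley n C i = (\<Sum>S\<in>Pow (players n - {i}).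
            fact (card S) * fact (n - 1 - card S) / fact n * (C (S \<union> {i}) - C S))"
proof -
  let ?P = "permutations_of_set (players n)"
  let ?g = "\<lambda>S. C (S \<union> {i}) - C S"
  have fin: "finite (players n)" by (simp add: players_def)
  have cn: "card (players n) = n" by (simp add: players_def)
  have "shapley n C i = (\<Sum>xs\<in>?P. ?g (preceding xs i)) / fact n"
    unfolding shapley_def using fin cn by (subst integral_pmf_of_set) auto
  also have "(\<Sum>xs\<in>?P. ?g (preceding xs i)) =
     (\<Sum>S\<in>Pow (players n - {i}). \<Sum>xs\<in>{xs\<in>?P. preceding xs i = S}. ?g (preceding xs i))"
  proof -
    have "(\<lambda>xs. preceding xs i) ` ?P \<subseteq> Pow (players n - {i})"
      by (auto simp: preceding_def permutations_of_set_def dest: set_takeWhileD)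
    then show ?thesis
      by (intro sum.group[symmetric]) (use fin in simp_all)
  qed
  also have "\<dots> = (\<Sum>S\<in>Pow (players n - {i}). fact (card S) * fact (n - 1 - card S) * ?g S)"
  proof (rule sum.cong[OF refl])
    fix S assume "S \<in> Pow (players n - {i})"
    then have "card {xs\<in>?P. preceding xs i = S} = fact (card S) * fact (n - 1 - card S)"
      using card_preceding_fiber[OF fin i] cn by auto
    then show "(\<Sum>xs\<in>{xs\<in>?P. preceding xs i = S}. ?g (preceding xs i)) =
       fact (card S) * fact (n - 1 - card S) * ?g S"
      by simp
  qed
  finally show ?thesis by (simp add: sum_divide_distrib)
qed

lemma expectation_shapley_dist:
  fixes f :: "nat set \<Rightarrow> real"
  shows "measure_pmf.expectation (shapley_dist n) f =
     (\<Sum>T\<in>Pow (players n). f T / (real (n + 1) * real (n choose card T)))"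
proof -
  let ?N = "players n"
  let ?U = "\<lambda>j. {S. S \<subseteq> ?N \<and> card S = j}"
  have fin: "finite ?N" by (simp add: players_def)
  have cn: "card ?N = n" by (simp add: players_def)
  have finU: "finite (?U j)" for j by (rule finite_subset[of _ "Pow ?N"]) (use fin in auto)
  have neU: "?U j \<noteq> {}" if "j \<in> {0..n}" for j
  proof -
    from that cn obtain T where "T \<subseteq> ?N" "card T = j" by (metis atLeastAtMost_iff obtain_subset_with_card_n)
    then show ?thesis by auto
  qed
  have cU: "card (?U j) = n choose j" for j using n_subsets[OF fin, of j] cn by simp
  have "measure_pmf.expectation (shapley_dist n) f =
      (\<Sum>j\<in>{0..n}. measure_pmf.expectation (pmf_of_set (?U j)) f /\<^sub>R real (card {0..n}))"
    unfolding shapley_dist_def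
    by (rule pmf_expectation_bind_pmf_of_set) (use finU neU in auto)
  also have "\<dots> = (\<Sum>j\<in>{0..n}. (\<Sum>T\<in>?U j. f T / (real (n + 1) * real (n choose card T))))"
  proof (rule sum.cong[OF refl])
    fix j assume j: "j \<in> {0..n}"
    have "measure_pmf.expectation (pmf_of_set (?U j)) f = (\<Sum>T\<in>?U j. f T) / real (n choose j)"
      using finU neU[OF j] cU by (simp add: integral_pmf_of_set)
    then show "measure_pmf.expectation (pmf_of_set (?U j)) f /\<^sub>R real (card {0..n}) =
        (\<Sum>T\<in>?U j. f T / (real (n + 1) * real (n choose card T)))"
      by (simp add: sum_divide_distrib field_simps)
  qed
  also have "\<dots> = (\<Sum>T\<in>Pow ?N. f T / (real (n + 1) * real (n choose card T)))"
  proof -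
    have "card ` Pow ?N \<subseteq> {0..n}"
      using cn fin by (auto dest: card_mono[OF fin])
    then have "(\<Sum>j\<in>{0..n}. \<Sum>T\<in>{T. T \<in> Pow ?N \<and> card T = j}. f T / (real (n + 1) * real (n choose card T)))
        = (\<Sum>T\<in>Pow ?N. f T / (real (n + 1) * real (n choose card T)))"
      by (intro sum.group) (use fin in auto)
    moreover have "{T. T \<in> Pow ?N \<and> card T = j} = ?U j" for j by auto
    ultimately show ?thesis by simp
  qed
  finally show ?thesis .
qed

lemma set_pmf_shapley_dist: "set_pmf (shapley_dist n) \<subseteq> Pow (players n)"
proof
  fix T assume "T \<in> set_pmf (shapley_dist n)"
  then obtain j where j: "j \<in> {0..n}"
    and T: "T \<in> set_pmf (pmf_of_set {S. S \<subseteq> players n \<and> card S = j})"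
    unfolding shapley_dist_def by auto
  have fin: "finite (players n)" by (simp add: players_def)
  have finU: "finite {S. S \<subseteq> players n \<and> card S = j}"
    by (rule finite_subset[of _ "Pow (players n)"]) (use fin in auto)
  have "card (players n) = n" by (simp add: players_def)
  then obtain S where "S \<subseteq> players n" "card S = j"
    using j by (metis atLeastAtMost_iff obtain_subset_with_card_n)
  then have "{S. S \<subseteq> players n \<and> card S = j} \<noteq> {}" by auto
  then show "T \<in> Pow (players n)" using T finU by (subst (asm) set_pmf_of_set) auto
qed

lemma shapley_coefficient_eq:
  assumes "s < n"
  shows "fact s * fact (n - 1 - s) / fact n = 1 / (real (s + 1) * real (n choose (s + 1)))"
    and "fact s * fact (n - 1 - s) / fact n = 1 / (real (n - s) * real (n choose s))"
proof -
  obtain r where n: "n = s + 1 + r"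
    using assms by (metis add.commute add_Suc_right less_iff_Suc_add Suc_eq_plus1)
  then have r: "n - 1 - s = r" and r': "n - (s + 1) = r" by simp_all
  have "real (n choose (s + 1)) = fact n / (fact (s + 1) * fact r)"
    using binomial_fact[of "s + 1" n, unfolded r'] assms by simp
  then show "fact s * fact (n - 1 - s) / fact n = 1 / (real (s + 1) * real (n choose (s + 1)))"
    unfolding r by simp
  have "real (n choose s) = fact n / (fact s * fact (r + 1))"
    using binomial_fact[of s n] assms n by simp
  then show "fact s * fact (n - 1 - s) / fact n = 1 / (real (n - s) * real (n choose s))"
    using n unfolding r by simp
qed

definition shapley_weight :: "nat \<Rightarrow> nat \<Rightarrow> nat set \<Rightarrow> real" where
  "shapley_weight n i T =
     (if i \<in> T then real (n + 1) / real (card T) else - (real (n + 1) / real (n - card T)))"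

lemma shapley_eq_expectation_weighted:
  assumes i: "i \<in> players n"
  shows "shapley n C i = measure_pmf.expectation (shapley_dist n) (\<lambda>T. C T * shapley_weight n i T)"
proof -
  let ?N' = "players n - {i}"
  let ?h = "\<lambda>T. C T * shapley_weight n i T / (real (n + 1) * real (n choose card T))"
  let ?co = "\<lambda>S. fact (card S) * fact (n - 1 - card S) / fact n :: real"
  have fin': "finite ?N'" by (simp add: players_def)
  have card_lt: "card S < n" if "S \<in> Pow ?N'" for S
  proof -
    have "card S \<le> card ?N'" using that fin' by (simp add: card_mono)
    then show ?thesis using i by (simp add: players_def) arith
  qed
  have inj: "inj_on (insert i) (Pow ?N')"
    by (rule inj_onI) (metis Diff_insert_absorb PowD subset_Diff_insert)
  have "Pow (players n) = Pow ?N' \<union> insert i ` Pow ?N'"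
    using i Pow_insert[of i ?N'] by (simp add: insert_absorb)
  then have "measure_pmf.expectation (shapley_dist n) (\<lambda>T. C T * shapley_weight n i T)
      = (\<Sum>T\<in>Pow ?N' \<union> insert i ` Pow ?N'. ?h T)"
    by (simp add: expectation_shapley_dist)
  also have "\<dots> = (\<Sum>S\<in>Pow ?N'. ?h S) + (\<Sum>T\<in>insert i ` Pow ?N'. ?h T)"
    by (rule sum.union_disjoint) (use fin' in auto)
  also have "(\<Sum>T\<in>insert i ` Pow ?N'. ?h T) = (\<Sum>S\<in>Pow ?N'. ?h (insert i S))"
    using sum.reindex[OF inj] by simp
  also have "(\<Sum>S\<in>Pow ?N'. ?h S) + (\<Sum>S\<in>Pow ?N'. ?h (insert i S))
      = (\<Sum>S\<in>Pow ?N'. ?co S * (C (S \<union> {i}) - C S))"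
    unfolding sum.distrib[symmetric]
  proof (rule sum.cong[OF refl])
    fix S assume S: "S \<in> Pow ?N'"
    then have S': "finite S" "i \<notin> S" using fin' by (auto intro: finite_subset)
    note co = shapley_coefficient_eq[OF card_lt[OF S]]
    have without_i: "?h S = - (?co S * C S)"
      unfolding co(2) using S' by (simp add: shapley_weight_def)
    have with_i: "?h (insert i S) = ?co S * C (S \<union> {i})"
      unfolding co(1) using S' by (simp add: shapley_weight_def)
    show "?h S + ?h (insert i S) = ?co S * (C (S \<union> {i}) - C S)"
      using without_i with_i by (simp add: right_diff_distrib)
  qed
  finally show ?thesis using shapley_eq_sum_coefficients[OF i] by simp
qed

lemma abs_shapley_weight_le:
  assumes i: "i \<in> players n" and T: "T \<subseteq> players n"
  shows "\<bar>shapley_weight n i T\<bar> \<le> real (n + 1)"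
proof (cases "i \<in> T")
  case True
  have "finite T" using T by (auto simp: players_def intro: finite_subset)
  then have "card T \<ge> 1" using True by (metis One_nat_def Suc_leI card_gt_0_iff empty_iff)
  then show ?thesis using True by (simp add: shapley_weight_def divide_le_eq mult_le_cancel_left1)
next
  case False
  then have "card T \<le> card (players n - {i})" using T by (intro card_mono) (auto simp: players_def)
  also have "\<dots> = n - 1" using i by (simp add: players_def)
  finally have "1 \<le> n - card T" using i by (simp add: players_def) arith
  then have "real (n - card T) \<ge> 1" by linarith
  then show ?thesis using False by (simp add: shapley_weight_def divide_le_eq mult_le_cancel_left1)
qed

lemma prob_empirical_mean_deviation_le:
  fixes D :: "'a pmf" and h :: "'a \<Rightarrow> real"
  assumes bound: "\<And>y. y \<in> set_pmf D \<Longrightarrow> \<bar>h y\<bar> \<le> B"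
    and "B > 0" and "m > 0" and "d \<ge> 0"
  shows "measure_pmf.prob (Pi_pmf {..<m} dflt (\<lambda>_. D))
           {f. d \<le> \<bar>(\<Sum>t<m. h (f t)) / real m - measure_pmf.expectation D h\<bar>}
         \<le> 2 * exp (- real m * d\<^sup>2 / (2 * B\<^sup>2))"
proof -
  define P where "P = Pi_pmf {..<m} dflt (\<lambda>_. D)"
  have component: "map_pmf (\<lambda>f. f t) P = D" if "t < m" for t
    using that by (simp add: P_def Pi_pmf_component)
  interpret Hoeffding_ineq_iid P "{..<m}" "\<lambda>t f. h (f t)" "\<lambda>f. h (f 0)" "-B" B
    "measure_pmf.expectation D h"
  proof unfold_locales
    show "prob_space.indep_vars (measure_pmf P) (\<lambda>_. borel) (\<lambda>t f. h (f t)) {..<m}"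
      unfolding P_def
      by (intro prob_space.indep_vars_compose2[OF _ indep_vars_Pi_pmf])
         (auto simp: measure_pmf.prob_space_axioms)
    show "distr (measure_pmf P) borel (\<lambda>f. h (f t)) = distr (measure_pmf P) borel (\<lambda>f. h (f 0))"
      if "t \<in> {..<m}" for t
    proof -
      have "distr (measure_pmf P) borel (\<lambda>f. h (f s)) = distr (measure_pmf D) borel h" if "s < m" for s
        unfolding component[OF that, symmetric] map_pmf_rep_eq by (subst distr_distr) (auto simp: o_def)
      then show ?thesis using that \<open>m > 0\<close> by simp
    qed
    show "AE f in measure_pmf P. h (f 0) \<in> {- B..B}"
    proof (rule AE_pmfI)
      fix f assume "f \<in> set_pmf P"
      then have "f 0 \<in> set_pmf D" using component[OF \<open>m > 0\<close>] by (metis pmf.set_map imageI)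
      then show "h (f 0) \<in> {- B..B}" using bound[of "f 0"] by (simp add: abs_le_iff)
    qed
    have "measure_pmf.expectation P (\<lambda>f. h (f 0)) = measure_pmf.expectation D h"
      using component[OF \<open>m > 0\<close>] integral_map_pmf[of "\<lambda>f. f 0" P h] by simp
    then show "measure_pmf.expectation D h \<equiv> measure_pmf.expectation P (\<lambda>f. h (f 0))"
      by simp
  qed auto
  have "2 * real m * d\<^sup>2 / (B - - B)\<^sup>2 = real m * d\<^sup>2 / (2 * B\<^sup>2)"
    by (simp add: power2_eq_square)
  then show ?thesis
    using Hoeffding_ineq_abs_ge'[of d] assms by (simp add: P_def lessThan_empty_iff)
qed

definition shapley_estimate :: "nat \<Rightarrow> nat \<Rightarrow> (nat \<Rightarrow> nat set \<times> real) \<Rightarrow> nat \<Rightarrow> real" where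
  "shapley_estimate n m smp i = (\<Sum>t<m. snd (smp t) * shapley_weight n i (fst (smp t))) / real m"

lemma prob_shapley_estimates_close:
  assumes "m > 0" and "d \<ge> 0" and "B > 0" and C: "\<And>S. S \<subseteq> players n \<Longrightarrow> \<bar>C S\<bar> \<le> B"
  shows "1 - real n * (2 * exp (- real m * d\<^sup>2 / (2 * (real (n + 1) * B)\<^sup>2)))
    \<le> measure_pmf.prob
         (bind_pmf (samples (shapley_dist n) m C) (\<lambda>smp. return_pmf (shapley_estimate n m smp)))
         {est. \<forall>i \<in> players n. \<bar>est i - shapley n C i\<bar> < d}"
proof -
  let ?D = "shapley_dist n"
  let ?P = "Pi_pmf {..<m} {} (\<lambda>_. ?D)"
  define h where "h = (\<lambda>i T. C T * shapley_weight n i T)"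
  define mean where "mean f i = (\<Sum>t<m. h i (f t)) / real m" for f i
  define far where "far i = {f. d \<le> \<bar>mean f i - measure_pmf.expectation ?D (h i)\<bar>}" for i
  have fin: "finite (players n)" by (simp add: players_def)
  have far_le: "measure_pmf.prob ?P (far i) \<le> 2 * exp (- real m * d\<^sup>2 / (2 * (real (n + 1) * B)\<^sup>2))"
    if i: "i \<in> players n" for i
  proof -
    have "\<bar>h i T\<bar> \<le> real (n + 1) * B" if "T \<in> set_pmf ?D" for T
    proof -
      have "T \<subseteq> players n" using that set_pmf_shapley_dist by auto
      then show ?thesis
        unfolding h_def abs_mult using C abs_shapley_weight_le[OF i] \<open>B > 0\<close>
        by (simp add: mult.commute mult_mono)
    qed
    then show ?thesis
      unfolding far_def mean_def using assms
      by (intro prob_empirical_mean_deviation_le) auto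
  qed
  have "bind_pmf (samples ?D m C) (\<lambda>smp. return_pmf (shapley_estimate n m smp)) = map_pmf mean ?P"
    unfolding samples_def bind_map_pmf map_pmf_def[of mean]
    by (intro bind_pmf_cong refl arg_cong[where f=return_pmf] ext)
       (simp add: shapley_estimate_def mean_def h_def)
  moreover have "mean -` {est. \<forall>i \<in> players n. \<bar>est i - shapley n C i\<bar> < d} =
      UNIV - (\<Union>i\<in>players n. far i)"
    by (auto simp: far_def shapley_eq_expectation_weighted h_def)
  moreover have "measure_pmf.prob ?P (\<Union>i\<in>players n. far i)
      \<le> real n * (2 * exp (- real m * d\<^sup>2 / (2 * (real (n + 1) * B)\<^sup>2)))"
  proof -
    have "measure_pmf.prob ?P (\<Union>i\<in>players n. far i) \<le> (\<Sum>i\<in>players n. measure_pmf.prob ?P (far i))"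
      by (rule measure_pmf.finite_measure_subadditive_finite) (auto simp: fin)
    also have "\<dots> \<le> real n * (2 * exp (- real m * d\<^sup>2 / (2 * (real (n + 1) * B)\<^sup>2)))"
      using sum_mono[of "players n", OF far_le] by (simp add: players_def)
    finally show ?thesis .
  qed
  ultimately show ?thesis
    using measure_pmf.prob_compl[of "\<Union>i\<in>players n. far i" ?P] by simp
qed

lemma good_estimate_of_close:
  assumes e: "0 < \<epsilon>" "\<epsilon> < 1" and t: "t > 0" and "\<epsilon> * t \<le> e"
    and cl: "\<bar>x - phi\<bar> < \<epsilon> * t"
  shows "good_estimate (1 - \<epsilon>) t e phi x"
  unfolding good_estimate_def
proof (intro conjI impI)
  assume p: "phi \<ge> t"
  have "\<epsilon> * t \<le> \<epsilon> * phi" using p e by simp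
  then show "(1 - \<epsilon>) * phi \<le> x" using cl by (simp add: algebra_simps abs_less_iff)
  have "x * (1 - \<epsilon>) \<le> phi"
  proof -
    have "x \<le> phi + \<epsilon> * phi" using cl \<open>\<epsilon> * t \<le> \<epsilon> * phi\<close> by (simp add: abs_less_iff)
    then have "x * (1 - \<epsilon>) \<le> (phi + \<epsilon> * phi) * (1 - \<epsilon>)" using e by (intro mult_right_mono) auto
    also have "\<dots> = phi - \<epsilon>*\<epsilon>*phi" by (simp add: algebra_simps)
    also have "\<dots> \<le> phi" using p t e by simp
    finally show ?thesis .
  qed
  then show "x \<le> phi / (1 - \<epsilon>)" using e by (simp add: field_simps)
next
  assume p: "phi \<le> - t"
  have "\<epsilon> * t \<le> \<epsilon> * (- phi)" using p e by (intro mult_left_mono) auto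
  then show "x \<le> (1 - \<epsilon>) * phi" using cl by (simp add: algebra_simps abs_less_iff)
  have "phi \<le> x * (1 - \<epsilon>)"
  proof -
    have "phi + \<epsilon> * phi \<le> x" using cl \<open>\<epsilon> * t \<le> \<epsilon> * (- phi)\<close> by (simp add: abs_less_iff)
    then have "(phi + \<epsilon> * phi) * (1 - \<epsilon>) \<le> x * (1 - \<epsilon>)" using e by (intro mult_right_mono) auto
    moreover have "(phi + \<epsilon> * phi) * (1 - \<epsilon>) = phi - \<epsilon>*\<epsilon>*phi" by (simp add: algebra_simps)
    moreover have "phi \<le> phi - \<epsilon>*\<epsilon>*phi" using p t e by (simp add: mult_nonneg_nonpos)
    ultimately show ?thesis by simp
  qed
  then show "phi / (1 - \<epsilon>) \<le> x" using e by (simp add: field_simps)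
next
  assume "\<bar>phi\<bar> < t"
  show "\<bar>phi - x\<bar> \<le> e" using cl \<open>\<epsilon> * t \<le> e\<close> by simp
qed

lemma nat_ceiling_le_poly:
  fixes K :: real and n :: nat and \<delta> :: real and p :: nat
  assumes K: "K > 0" and d: "\<delta> > 0"
  shows "real (nat \<lceil>K * real n ^ (p + 1) / \<delta>\<rceil>) \<le> (K + 1) * (real n + 1 / \<delta>) ^ (p + 2)"
proof (cases "n = 0")
  case True
  then show ?thesis using K d by simp
next
  case False
  define x where "x = real n + 1 / \<delta>"
  have "1 \<le> x" using False d by (simp add: x_def add_increasing2)
  have "0 \<le> K * real n ^ (p + 1) / \<delta>" using K d by simp
  then have "real (nat \<lceil>K * real n ^ (p + 1) / \<delta>\<rceil>) \<le> K * (real n ^ (p + 1) * (1 / \<delta>)) + 1"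
    by simp
  also have "\<dots> \<le> K * (x ^ (p + 1) * x) + x ^ (p + 2)"
    using K d \<open>1 \<le> x\<close> unfolding x_def
    by (intro add_mono mult_left_mono mult_mono power_mono one_le_power) auto
  also have "\<dots> = (K + 1) * x ^ (p + 2)" by (simp add: algebra_simps)
  finally show ?thesis by (simp add: x_def)
qed

lemma sample_size_bounds_union_failure:
  fixes \<epsilon> c \<delta> :: real
  assumes \<epsilon>: "0 < \<epsilon>" and n: "n \<ge> 1" and "\<delta> > 0" and "m > 0"
    and m: "16 * (\<bar>c\<bar> + 1)\<^sup>2 / \<epsilon>\<^sup>2 * real n ^ (2 * k + 5) / \<delta> \<le> real m"
  defines "B \<equiv> (\<bar>c\<bar> + 1) * real n ^ k"
  shows "real n * (2 * exp (- real m * (\<epsilon> / real n)\<^sup>2 / (2 * (real (n + 1) * B)\<^sup>2))) \<le> \<delta>"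
proof -
  define Q where "Q = 16 * (\<bar>c\<bar> + 1)\<^sup>2 / \<epsilon>\<^sup>2 * real n ^ (2 * k + 5)"
  define y where "y = real m * (\<epsilon> / real n)\<^sup>2 / (2 * (real (n + 1) * B)\<^sup>2)"
  have Q_le: "Q / \<delta> \<le> real m" using m by (simp add: Q_def)
  have "real n > 0" "B > 0" using n by (simp_all add: B_def add_pos_nonneg)
  then have "y > 0" using \<open>m > 0\<close> \<epsilon> by (simp add: y_def)
  have "real n * (2 * exp (- y)) \<le> 2 * real n / y"
  proof -
    have "y \<le> exp y" using exp_ge_add_one_self[of y] by linarith
    then have "exp (- y) \<le> 1 / y" using \<open>y > 0\<close> by (simp add: exp_minus field_simps)
    then have "2 * real n * exp (- y) \<le> 2 * real n * (1 / y)" by (intro mult_left_mono) auto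
    then show ?thesis by (simp add: ac_simps)
  qed
  also have "2 * real n / y = 4 * real n ^ 3 * (real (n + 1))\<^sup>2 * B\<^sup>2 / (real m * \<epsilon>\<^sup>2)"
    using \<open>real n > 0\<close> \<open>B > 0\<close> \<open>m > 0\<close> \<epsilon>
    by (simp add: y_def field_simps power2_eq_square eval_nat_numeral)
  also have "\<dots> \<le> 4 * real n ^ 3 * (2 * real n)\<^sup>2 * B\<^sup>2 / (real m * \<epsilon>\<^sup>2)"
    using n by (intro divide_right_mono mult_right_mono mult_left_mono power_mono) auto
  also have "\<dots> = Q / real m"
    by (simp add: Q_def B_def power_mult_distrib power_add power2_eq_square eval_nat_numeral ac_simps)
  also have "\<dots> \<le> \<delta>"
    using Q_le \<open>m > 0\<close> \<open>\<delta> > 0\<close> by (simp add: pos_divide_le_eq mult.commute)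
  finally show ?thesis by (simp add: y_def)
qed

lemma prob_shapley_estimates_good:
  fixes \<epsilon> c \<delta> :: real
  assumes \<epsilon>: "0 < \<epsilon>" "\<epsilon> < 1" and n: "n \<ge> 1" and C: "C \<in> bounded_costs c k n" and "\<delta> > 0"
    and m: "16 * (\<bar>c\<bar> + 1)\<^sup>2 / \<epsilon>\<^sup>2 * real n ^ (2 * k + 5) / \<delta> \<le> real m"
  shows "1 - \<delta> \<le> measure_pmf.prob
           (bind_pmf (samples (shapley_dist n) m C) (\<lambda>smp. return_pmf (shapley_estimate n m smp)))
           {est. \<forall>i \<in> players n.
              good_estimate (1 - \<epsilon>) (1 / (1 * real n ^ 1)) (\<epsilon> / real n) (shapley n C i) (est i)}"
proof -
  let ?M = "bind_pmf (samples (shapley_dist n) m C) (\<lambda>smp. return_pmf (shapley_estimate n m smp))"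
  define B where "B = (\<bar>c\<bar> + 1) * real n ^ k"
  have "real n > 0" "B > 0" using n by (simp_all add: B_def add_pos_nonneg)
  have "0 < 16 * (\<bar>c\<bar> + 1)\<^sup>2 / \<epsilon>\<^sup>2 * real n ^ (2 * k + 5) / \<delta>"
    using \<epsilon> n \<open>\<delta> > 0\<close> by (simp add: add_pos_nonneg)
  then have "m > 0" using m by linarith
  have C_le: "\<bar>C S\<bar> \<le> B" if "S \<subseteq> players n" for S
  proof -
    have "0 \<le> C S" "C S \<le> c * real n ^ k" using C that by (auto simp: bounded_costs_def)
    moreover have "c * real n ^ k \<le> B" by (simp add: B_def mult_right_mono)
    ultimately show ?thesis by simp
  qed
  have "1 - \<delta> \<le> 1 - real n * (2 * exp (- real m * (\<epsilon> / real n)\<^sup>2 / (2 * (real (n + 1) * B)\<^sup>2)))"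
    using sample_size_bounds_union_failure[OF \<epsilon>(1) n \<open>\<delta> > 0\<close> \<open>m > 0\<close> m] by (simp add: B_def)
  also have "\<dots> \<le> measure_pmf.prob ?M
      {est. \<forall>i \<in> players n. \<bar>est i - shapley n C i\<bar> < \<epsilon> / real n}"
    using \<epsilon> by (intro prob_shapley_estimates_close \<open>m > 0\<close> \<open>B > 0\<close> C_le) simp_all
  also have "\<dots> \<le> measure_pmf.prob ?M
      {est. \<forall>i \<in> players n.
         good_estimate (1 - \<epsilon>) (1 / (1 * real n ^ 1)) (\<epsilon> / real n) (shapley n C i) (est i)}"
    using \<epsilon> \<open>real n > 0\<close>
    by (intro measure_pmf.finite_measure_mono) (auto intro!: good_estimate_of_close)
  finally show ?thesis .
qed

theorem proposition1:
  fixes \<epsilon> c :: real and k :: nat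
  assumes "0 < \<epsilon>" and "\<epsilon> < 1"
  shows "shapley_approx_from_samples (1 - \<epsilon>) (bounded_costs c k) shapley_dist"
proof -
  define K where "K = 16 * (\<bar>c\<bar> + 1)\<^sup>2 / \<epsilon>\<^sup>2"
  define m where "m n \<delta> = nat \<lceil>K * real n ^ (2 * k + 5) / \<delta>\<rceil>" for n \<delta>
  define A where "A n \<delta> smp = return_pmf (shapley_estimate n (m n \<delta>) smp)" for n \<delta> smp
  have "K > 0" using assms by (simp add: K_def add_pos_nonneg)
  have size: "real (m n \<delta>) \<le> (K + 1) * (real n + 1 / \<delta>) ^ (2 * k + 6)" if "\<delta> > 0" for n \<delta>
    using nat_ceiling_le_poly[OF \<open>K > 0\<close> that, of n "2 * k + 4"] by (simp add: m_def add.commute)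
  have good: "1 - \<delta> \<le> measure_pmf.prob (bind_pmf (samples (shapley_dist n) (m n \<delta>) C) (A n \<delta>))
      {est. \<forall>i \<in> players n.
         good_estimate (1 - \<epsilon>) (1 / (1 * real n ^ 1)) (\<epsilon> / real n) (shapley n C i) (est i)}"
    if "n \<ge> 1" "C \<in> bounded_costs c k n" "\<delta> > 0" for n C \<delta>
    unfolding A_def
    by (rule prob_shapley_estimates_good[OF assms that]) (simp add: m_def K_def real_nat_ceiling_ge)
  show ?thesis
    unfolding shapley_approx_from_samples_def
    using size good lim_const_over_n[of \<epsilon>] \<open>K > 0\<close>
    by (intro exI[of _ m] exI[of _ A] exI[of _ "K + 1"] exI[of _ "2 * k + 6"] exI[of _ 1] exI[of _ 1]
        exI[of _ "\<lambda>n. \<epsilon> / real n"]) auto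
qed

end
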